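(* Let $(\mathcal T_0,\mathfrak c)$ be an $(N{+}1)$-colored initial triangulation in $\mathbb R^n$, let $\mathcal T\in\mathbb B$ and $M\in\mathcal T$. Then every $T\in\mathrm{Refine}(\mathcal T,M)\setminus\mathcal T$ satisfies $\ell(T)\le\ell(M)+1$.
   Context: $n\ge2$, $N\ge n$. An $(N{+}1)$-colored triangulation is a conforming triangulation $\mathcal T_0$ of a polyhedral domain in $\mathbb R^n$ with $\mathfrak c:\mathcal V(\mathcal T_0)\to\{0,\dots,N\}$ giving distinct colors to the vertices of each simplex. Each vertex $v$ has an integer generation $g(v)$, with level $\ell(v)\in\mathbb Z$ and type $t(v)\in\{1,\dots,N\}$ defined by $g(v)=N(\ell(v)-1)+t(v)$; initial vertices have $g(v)=-\mathfrak c(v)$. For an $n$-simplex $T=[v_0,\dots,v_n]$ with $g(v_0)>\dots>g(v_n)$: if $\ell(v_n)\ne\ell(v_{n-1})$ then $\mathrm{bse}(T)=[v_{n-1},v_n]$ and its midpoint has generation $g(v_{n-1})+N$; otherwise, with $j=\min\{k:\ell(v_k)=\ell(v_n)\}$, $\mathrm{bse}(T)=[v_j,v_n]$ and its midpoint has generation $g(v_n)+2N+1-t(v_j)$. Children replace one endpoint of $\mathrm{bse}(T)$ by the midpoint. The level of a simplex is $\ell(T)=\max_{v\in\mathcal V(T)}\ell(v)$. $\mathrm{Refine}(\mathcal T,T)$: with $e=\mathrm{bse}(T)$ and $\omega(e)$ the simplices of $\mathcal T$ containing edge $e$, if some $T'\in\omega(e)$ has $\mathrm{bse}(T')\ne e$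 return $\mathrm{Refine}(\mathrm{Refine}(\mathcal T,T'),T)$, else replace every simplex of $\omega(e)$ by its children. $\mathbb B$ is the set of triangulations obtained from $\mathcal T_0$ by finitely many refinements. *)

theory Defs
  imports "HOL-Analysis.Analysis"
begin

type_synonym 'n smplx = "(real^'n) set"
type_synonym 'n state = "'n smplx set \<times> ((real^'n) \<Rightarrow> int)"

definition is_nsimplex :: "'n::finite smplx \<Rightarrow> bool" where
  "is_nsimplex S \<longleftrightarrow> finite S \<and> card S = CARD('n) + 1 \<and> \<not> affine_dependent S"

definition conforming_triangulation :: "'n::finite smplx set \<Rightarrow> bool" where
  "conforming_triangulation \<T> \<longleftrightarrow>
     finite \<T> \<and> \<T> \<noteq> {} \<and> (\<forall>S\<in>\<T>. is_nsimplex S) \<and>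
     (\<forall>S\<in>\<T>. \<forall>S'\<in>\<T>. convex hull S \<inter> convex hull S' = convex hull (S \<inter> S'))"

definition polyhedral_domain_triangulation :: "'n::finite smplx set \<Rightarrow> bool" where
  "polyhedral_domain_triangulation \<T> \<longleftrightarrow>
     conforming_triangulation \<T> \<and>
     (let D = (\<Union>S\<in>\<T>. convex hull S) in
        polyhedron D \<and> connected (interior D) \<and> closure (interior D) = D)"

definition vertices :: "'n::finite smplx set \<Rightarrow> (real^'n) set" where
  "vertices \<T> = \<Union>\<T>"

definition colored_triangulation :: "nat \<Rightarrow> 'n::finite smplx set \<Rightarrow> ((real^'n) \<Rightarrow> nat) \<Rightarrow> bool" where
  "colored_triangulation N \<T>0 c \<longleftrightarrow>
     polyhedral_domain_triangulation \<T>0 \<and>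
     (\<forall>v\<in>vertices \<T>0. c v \<le> N) \<and> (\<forall>S\<in>\<T>0. inj_on c S)"

text \<open>Level and type of a vertex: g v = N (lev v - 1) + vtype v with vtype v in {1..N}.\<close>
definition lev :: "nat \<Rightarrow> ((real^'n) \<Rightarrow> int) \<Rightarrow> real^'n \<Rightarrow> int" where
  "lev N g v = (g v - 1) div int N + 1"

definition vtype :: "nat \<Rightarrow> ((real^'n) \<Rightarrow> int) \<Rightarrow> real^'n \<Rightarrow> int" where
  "vtype N g v = g v - int N * (lev N g v - 1)"

definition slev :: "nat \<Rightarrow> ((real^'n) \<Rightarrow> int) \<Rightarrow> 'n::finite smplx \<Rightarrow> int" where
  "slev N g T = Max (lev N g ` T)"

definition vlow :: "((real^'n) \<Rightarrow> int) \<Rightarrow> 'n::finite smplx \<Rightarrow> real^'n" where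
  "vlow g T = (THE v. v \<in> T \<and> (\<forall>w\<in>T. g v \<le> g w))"

definition vlow2 :: "((real^'n) \<Rightarrow> int) \<Rightarrow> 'n::finite smplx \<Rightarrow> real^'n" where
  "vlow2 g T = vlow g (T - {vlow g T})"

text \<open>v_j with j = min{k. lev v_k = lev v_n}: the vertex of largest generation among
  those having the level of v_n (vertices are ordered by decreasing generation).\<close>
definition vtop_lev :: "nat \<Rightarrow> ((real^'n) \<Rightarrow> int) \<Rightarrow> 'n::finite smplx \<Rightarrow> real^'n" where
  "vtop_lev N g T = (THE v. v \<in> T \<and> lev N g v = lev N g (vlow g T) \<and>
      (\<forall>w\<in>T. lev N g w = lev N g (vlow g T) \<longrightarrow> g w \<le> g v))"

definition bse_other :: "nat \<Rightarrow> ((real^'n) \<Rightarrow> int) \<Rightarrow> 'n::finite smplx \<Rightarrow> real^'n" where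
  "bse_other N g T = (if lev N g (vlow2 g T) \<noteq> lev N g (vlow g T) then vlow2 g T else vtop_lev N g T)"

definition bse :: "nat \<Rightarrow> ((real^'n) \<Rightarrow> int) \<Rightarrow> 'n::finite smplx \<Rightarrow> (real^'n) set" where
  "bse N g T = {bse_other N g T, vlow g T}"

definition midgen :: "nat \<Rightarrow> ((real^'n) \<Rightarrow> int) \<Rightarrow> 'n::finite smplx \<Rightarrow> int" where
  "midgen N g T = (if lev N g (vlow2 g T) \<noteq> lev N g (vlow g T)
      then g (vlow2 g T) + int N
      else g (vlow g T) + 2 * int N + 1 - vtype N g (vtop_lev N g T))"

definition bse_mid :: "nat \<Rightarrow> ((real^'n) \<Rightarrow> int) \<Rightarrow> 'n::finite smplx \<Rightarrow> real^'n" where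
  "bse_mid N g T = midpoint (bse_other N g T) (vlow g T)"

definition patch :: "'n::finite smplx set \<Rightarrow> (real^'n) set \<Rightarrow> 'n::finite smplx set" where
  "patch \<T> e = {S \<in> \<T>. e \<subseteq> S}"

definition children :: "'n::finite smplx \<Rightarrow> real^'n \<Rightarrow> real^'n \<Rightarrow> 'n::finite smplx set" where
  "children S a b = {insert (midpoint a b) (S - {a}), insert (midpoint a b) (S - {b})}"

text \<open>Refine as a relation: refine N st T st' means that Refine(st,T) can return st'.
  The state carries the generation function; the recursive call may pick any
  offending simplex of omega(e).\<close>
inductive refine :: "nat \<Rightarrow> 'n::finite state \<Rightarrow> 'n::finite smplx \<Rightarrow> 'n::finite state \<Rightarrow> bool" for N where
  recur: "\<lbrakk> S \<in> patch \<T> (bse N g T); bse N g S \<noteq> bse N g T;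
            refine N (\<T>, g) S st1; refine N st1 T st2 \<rbrakk>
          \<Longrightarrow> refine N (\<T>, g) T st2"
| bisect: "\<lbrakk> \<forall>S\<in>patch \<T> (bse N g T). bse N g S = bse N g T \<rbrakk>
          \<Longrightarrow> refine N (\<T>, g) T
                ((\<T> - patch \<T> (bse N g T)) \<union>
                   (\<Union>S\<in>patch \<T> (bse N g T). children S (bse_other N g T) (vlow g T)),
                 g(bse_mid N g T := midgen N g T))"

inductive_set BB :: "nat \<Rightarrow> 'n::finite smplx set \<Rightarrow> ((real^'n) \<Rightarrow> nat) \<Rightarrow> 'n::finite state set"
  for N \<T>0 c where
  init: "(\<T>0, \<lambda>v. - int (c v)) \<in> BB N \<T>0 c"
| step: "\<lbrakk> (\<T>, g) \<in> BB N \<T>0 c; M \<in> \<T>; refine N (\<T>, g) M st \<rbrakk> \<Longrightarrow> st \<in> BB N \<T>0 c"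

end

theory Submission
  imports Defs
begin

text \<open>
  Identify a simplex with the set A of the generations of its vertices, and call A admissible if
  every element of A is smaller than the generation mu(A) that Refine gives to the midpoint of the
  bisection edge. Every edge [x, y] of a simplex has a candidate midpoint generation computed by
  the same formula; for admissible A the bisection edge is the unique edge minimising it. Hence
  initial simplices and both children of an admissible simplex are admissible, and each recursive
  call of Refine issued while refining M bisects an edge whose midpoint generation is strictly
  below mu(M). All simplices created by Refine(T, M) therefore have vertex generations at most
  mu(M), and the level of mu(M) exceeds the level of M by at most one. Conformity of the mesh is
  carried along only to guarantee that every midpoint is a new vertex, so that bisection never
  changes the generation of an existing vertex.
\<close>

section \<open>Levels and types of generations\<close>

definition gen_level :: "nat \<Rightarrow> int \<Rightarrow> int" where
  "gen_level N x = (x - 1) div int N + 1"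

definition gen_type :: "nat \<Rightarrow> int \<Rightarrow> int" where
  "gen_type N x = x - int N * (gen_level N x - 1)"

lemma gen_type_bounds:
  assumes "0 < N"
  shows "1 \<le> gen_type N x" "gen_type N x \<le> int N"
proof -
  have "gen_type N x = (x - 1) mod int N + 1"
    unfolding gen_type_def gen_level_def by (simp add: minus_div_mult_eq_mod [symmetric] algebra_simps)
  moreover have "0 \<le> (x - 1) mod int N" "(x - 1) mod int N < int N" using assms by auto
  ultimately show "1 \<le> gen_type N x" "gen_type N x \<le> int N" by linarith+
qed

lemma gen_decomp: "x = int N * (gen_level N x - 1) + gen_type N x"
  unfolding gen_type_def by simp

lemma gen_diff: "y - x = int N * (gen_level N y - gen_level N x) + (gen_type N y - gen_type N x)"
  using gen_decomp[of x N] gen_decomp[of y N] by (simp add: algebra_simps)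

lemma same_level_diff: "gen_level N x = gen_level N y \<Longrightarrow> y - x = gen_type N y - gen_type N x"
  using gen_diff[of y x N] by simp

lemma same_level_less_iff: "gen_level N x = gen_level N y \<Longrightarrow> x < y \<longleftrightarrow> gen_type N x < gen_type N y"
  using same_level_diff[of N x y] by linarith

lemma next_level_diff:
  "gen_level N y = gen_level N x + 1 \<Longrightarrow> y - x = int N + gen_type N y - gen_type N x"
  using gen_diff[of y x N] by simp

lemma gen_level_mono: "x \<le> y \<Longrightarrow> gen_level N x \<le> gen_level N y"
  unfolding gen_level_def by (cases "N = 0") (simp_all add: zdiv_mono1)

lemma less_of_gen_level_less: "gen_level N x < gen_level N y \<Longrightarrow> x < y"
  using gen_level_mono[of y x N] by linarith

lemma gen_level_eq:
  assumes "0 < N" "1 \<le> t" "t \<le> int N"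
  shows "gen_level N (int N * (L - 1) + t) = L"
proof -
  have "(int N * (L - 1) + t - 1) div int N = (t - 1 + int N * (L - 1)) div int N"
    by (simp add: algebra_simps)
  also have "\<dots> = (t - 1) div int N + (L - 1)" using assms(1) by simp
  finally have "(int N * (L - 1) + t - 1) div int N = (t - 1) div int N + (L - 1)" .
  moreover have "(t - 1) div int N = 0" using assms by (simp add: div_pos_pos_trivial)
  ultimately show ?thesis unfolding gen_level_def by simp
qed

lemma gen_level_add_N: "0 < N \<Longrightarrow> gen_level N (x + int N) = gen_level N x + 1"
  using gen_level_eq[of N "gen_type N x" "gen_level N x + 1"] gen_type_bounds[of N x]
  unfolding gen_type_def by (simp add: algebra_simps)

lemma gen_level_eq_0: "0 < N \<Longrightarrow> - int N < x \<Longrightarrow> x \<le> 0 \<Longrightarrow> gen_level N x = 0"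
  using gen_level_eq[of N "x + int N" 0] by simp

section \<open>Bisection of a set of generations\<close>

definition second_min :: "int set \<Rightarrow> int" where
  "second_min A = Min (A - {Min A})"

definition top_of_low_level :: "nat \<Rightarrow> int set \<Rightarrow> int" where
  "top_of_low_level N A = Max {x \<in> A. gen_level N x = gen_level N (Min A)}"

definition low_levels_split :: "nat \<Rightarrow> int set \<Rightarrow> bool" where
  "low_levels_split N A \<longleftrightarrow> gen_level N (second_min A) \<noteq> gen_level N (Min A)"

definition bisect_partner :: "nat \<Rightarrow> int set \<Rightarrow> int" where
  "bisect_partner N A = (if low_levels_split N A then second_min A else top_of_low_level N A)"

text \<open>The midpoint rule of the bisection edge, applied to an arbitrary edge with endpoint
  generations x > y.\<close>

definition edge_gen :: "nat \<Rightarrow> int \<Rightarrow> int \<Rightarrow> int" where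
  "edge_gen N x y =
     (if gen_level N x \<noteq> gen_level N y then x + int N else y + 2 * int N + 1 - gen_type N x)"

definition bisect_gen :: "nat \<Rightarrow> int set \<Rightarrow> int" where
  "bisect_gen N A = edge_gen N (bisect_partner N A) (Min A)"

definition admissible :: "nat \<Rightarrow> int set \<Rightarrow> bool" where
  "admissible N A \<longleftrightarrow> (\<forall>x\<in>A. x < bisect_gen N A)"

lemma second_min_props:
  assumes "finite A" "2 \<le> card A"
  shows "second_min A \<in> A" "Min A < second_min A"
    "\<And>x. x \<in> A \<Longrightarrow> x \<noteq> Min A \<Longrightarrow> second_min A \<le> x"
proof -
  have "A \<noteq> {}" using assms by auto
  then have "card (A - {Min A}) \<noteq> 0" using assms by (simp add: card_Diff_singleton)
  then have "A - {Min A} \<noteq> {}" by (metis card.empty)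
  then have "second_min A \<in> A - {Min A}"
    unfolding second_min_def using assms(1) by (intro Min_in) auto
  then show "second_min A \<in> A" "Min A < second_min A"
    using Min_le[OF assms(1)] by (auto simp: order.strict_iff_order)
  show "\<And>x. x \<in> A \<Longrightarrow> x \<noteq> Min A \<Longrightarrow> second_min A \<le> x"
    unfolding second_min_def using assms(1) by simp
qed

lemma top_of_low_level_props:
  assumes "finite A" "A \<noteq> {}"
  shows "top_of_low_level N A \<in> A" "gen_level N (top_of_low_level N A) = gen_level N (Min A)"
    "\<And>x. x \<in> A \<Longrightarrow> gen_level N x = gen_level N (Min A) \<Longrightarrow> x \<le> top_of_low_level N A"
proof -
  let ?B = "{x \<in> A. gen_level N x = gen_level N (Min A)}"
  have "Min A \<in> ?B" using Min_in[OF assms] by simp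
  then have "Max ?B \<in> ?B" using assms(1) by (intro Max_in) auto
  then show "top_of_low_level N A \<in> A" "gen_level N (top_of_low_level N A) = gen_level N (Min A)"
    unfolding top_of_low_level_def by auto
  show "\<And>x. x \<in> A \<Longrightarrow> gen_level N x = gen_level N (Min A) \<Longrightarrow> x \<le> top_of_low_level N A"
    unfolding top_of_low_level_def using assms(1) by simp
qed

lemma bisect_gen_split:
  assumes "finite A" "2 \<le> card A" "low_levels_split N A"
  shows "bisect_partner N A = second_min A" "bisect_gen N A = second_min A + int N"
    "gen_level N (Min A) < gen_level N (second_min A)"
proof -
  have "Min A < second_min A" by (rule second_min_props(2)[OF assms(1,2)])
  then show "gen_level N (Min A) < gen_level N (second_min A)"
    using gen_level_mono[of "Min A" "second_min A" N] assms(3) unfolding low_levels_split_def by simp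
  then show "bisect_partner N A = second_min A" "bisect_gen N A = second_min A + int N"
    using assms(3) unfolding bisect_gen_def bisect_partner_def edge_gen_def by auto
qed

lemma bisect_gen_unsplit:
  assumes "finite A" "2 \<le> card A" "0 < N" "\<not> low_levels_split N A"
  defines "t \<equiv> top_of_low_level N A"
  shows "bisect_partner N A = t" "Min A < t" "gen_type N (Min A) < gen_type N t"
    "bisect_gen N A = Min A + 2 * int N + 1 - gen_type N t"
    "gen_level N (bisect_gen N A) = gen_level N (Min A) + 1"
proof -
  have ne: "A \<noteq> {}" using assms(2) by auto
  note t = top_of_low_level_props[OF assms(1) ne, where N=N, folded t_def]
  have "second_min A \<le> t"
    using t(3) second_min_props[OF assms(1,2)] assms(4) unfolding low_levels_split_def by simp
  then show "Min A < t" using second_min_props(2)[OF assms(1,2)] by simp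
  then show tt: "gen_type N (Min A) < gen_type N t"
    using same_level_less_iff[of N "Min A" t] t(2) by simp
  show "bisect_partner N A = t" using assms(4) unfolding bisect_partner_def t_def by simp
  then show mu: "bisect_gen N A = Min A + 2 * int N + 1 - gen_type N t"
    unfolding bisect_gen_def edge_gen_def using t(2) by simp
  define r where "r = int N + 1 + gen_type N (Min A) - gen_type N t"
  have "1 \<le> r" "r \<le> int N"
    using tt gen_type_bounds[OF assms(3), of "Min A"] gen_type_bounds[OF assms(3), of t]
    unfolding r_def by linarith+
  moreover have "bisect_gen N A = int N * ((gen_level N (Min A) + 1) - 1) + r"
    using mu gen_decomp[of "Min A" N] unfolding r_def by (simp add: algebra_simps)
  ultimately show "gen_level N (bisect_gen N A) = gen_level N (Min A) + 1"
    using gen_level_eq[OF assms(3), of r "gen_level N (Min A) + 1"] by simp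
qed

lemma bisect_partner_props:
  assumes "finite A" "2 \<le> card A" "0 < N"
  shows "bisect_partner N A \<in> A" "Min A < bisect_partner N A"
proof -
  have "A \<noteq> {}" using assms(2) by auto
  then have "bisect_partner N A \<in> A \<and> Min A < bisect_partner N A"
    using bisect_gen_split[OF assms(1,2)] second_min_props[OF assms(1,2)]
      bisect_gen_unsplit[OF assms] top_of_low_level_props[OF assms(1)]
    by (cases "low_levels_split N A") auto
  then show "bisect_partner N A \<in> A" "Min A < bisect_partner N A" by auto
qed

lemma gen_level_bisect_gen_le:
  assumes "finite A" "2 \<le> card A" "0 < N"
  obtains x where "x \<in> A" "gen_level N (bisect_gen N A) \<le> gen_level N x + 1"
proof (cases "low_levels_split N A")
  case True
  then show ?thesis
    using that bisect_gen_split[OF assms(1,2)] second_min_props[OF assms(1,2)] gen_level_add_N[OF assms(3)]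
    by simp
next
  case False
  have "A \<noteq> {}" using assms(2) by auto
  then show ?thesis using that bisect_gen_unsplit[OF assms False] Min_in[OF assms(1)] by simp
qed

lemma less_edge_gen:
  assumes "0 < N" "y < x"
  shows "x < edge_gen N x y"
  using same_level_diff[of N y x] gen_type_bounds[OF assms(1), of x] gen_type_bounds[OF assms(1), of y] assms
  unfolding edge_gen_def by auto

lemma bisect_gen_less_edge_gen_split:
  assumes "finite A" "2 \<le> card A" "0 < N" "low_levels_split N A"
    and "x \<in> A" "y \<in> A" "y < x" "\<not> (x = bisect_partner N A \<and> y = Min A)"
  shows "bisect_gen N A < edge_gen N x y"
proof -
  note split = bisect_gen_split[OF assms(1,2,4)]
  note second = second_min_props[OF assms(1,2)]
  have "Min A \<le> y" using Min_le[OF assms(1,6)] .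
  then have x2: "second_min A \<le> x" using second(3)[OF assms(5)] assms(7) by simp
  show ?thesis
  proof (cases "gen_level N x = gen_level N y")
    case False
    have "x \<noteq> second_min A"
      using second(3)[OF assms(6)] assms(7,8) split(1) by force
    then show ?thesis using False x2 split(2) unfolding edge_gen_def by simp
  next
    case True
    have "gen_level N (second_min A) \<le> gen_level N x" using gen_level_mono[OF x2] .
    then have "y \<noteq> Min A" using True split(3) by auto
    then have "second_min A \<le> y" using second(3)[OF assms(6)] by simp
    then show ?thesis using True split(2) gen_type_bounds[OF assms(3), of x]
      unfolding edge_gen_def by simp
  qed
qed

lemma bisect_gen_less_edge_gen_unsplit:
  assumes "finite A" "2 \<le> card A" "0 < N" "\<not> low_levels_split N A" "admissible N A"
    and "x \<in> A" "y \<in> A" "y < x" "\<not> (x = bisect_partner N A \<and> y = Min A)"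
  shows "bisect_gen N A < edge_gen N x y"
proof -
  define t where "t = top_of_low_level N A"
  define L where "L = gen_level N (Min A)"
  have "A \<noteq> {}" using assms(2) by auto
  note top = top_of_low_level_props[OF assms(1) this, where N=N, folded t_def L_def]
  note unsplit = bisect_gen_unsplit[OF assms(1-4), folded t_def L_def]
  note type_bounds = gen_type_bounds[OF assms(3)]
  have "Min A \<le> y" using Min_le[OF assms(1,7)] .
  then have y_ge: "L \<le> gen_level N y" using gen_level_mono unfolding L_def by blast
  have "x < bisect_gen N A" using assms(5,6) unfolding admissible_def by blast
  then have x_le: "gen_level N x \<le> L + 1" using gen_level_mono[of x "bisect_gen N A" N] unsplit(5) by simp
  have y_le_x: "gen_level N y \<le> gen_level N x" using gen_level_mono assms(8) by simp
  show ?thesis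
  proof (cases "gen_level N x = gen_level N y")
    case False
    then have "gen_level N x = gen_level N (Min A) + 1" using x_le y_ge y_le_x unfolding L_def by simp
    then show ?thesis
      using next_level_diff[of N x "Min A"] False unsplit(3,4) type_bounds[of x]
      unfolding edge_gen_def by simp
  next
    case same: True
    show ?thesis
    proof (cases "gen_level N y = L")
      case True
      then have "x \<le> t" using top(3)[OF assms(6)] same unfolding L_def by simp
      moreover have "x \<noteq> t \<or> y \<noteq> Min A" using assms(9) unsplit(1) by auto
      ultimately have "x < t \<or> Min A < y" using \<open>Min A \<le> y\<close> by auto
      moreover have "t - x = gen_type N t - gen_type N x"
        using same_level_diff[of N x t] top(2) same True unfolding L_def by simp
      moreover have "y - Min A = gen_type N y - gen_type N (Min A)"
        using same_level_diff[of N "Min A" y] True unfolding L_def by simp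
      moreover have "edge_gen N x y = y + 2 * int N + 1 - gen_type N x"
        using same unfolding edge_gen_def by simp
      ultimately show ?thesis using unsplit(4) \<open>x \<le> t\<close> \<open>Min A \<le> y\<close> by linarith
    next
      case False
      then have "gen_level N y = gen_level N (Min A) + 1"
        using x_le y_ge y_le_x unfolding L_def by simp
      then show ?thesis
        using next_level_diff[of N y "Min A"] same unsplit(3,4) type_bounds[of x] type_bounds[of y]
        unfolding edge_gen_def by simp
    qed
  qed
qed

text \<open>The bisection edge is the unique edge of an admissible simplex with minimal
  \<^const>\<open>edge_gen\<close>: this is what makes the recursion of Refine decrease midpoint generations.\<close>

lemma bisect_gen_less_edge_gen:
  assumes "finite A" "2 \<le> card A" "0 < N" "admissible N A"
    and "x \<in> A" "y \<in> A" "y < x" "\<not> (x = bisect_partner N A \<and> y = Min A)"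
  shows "bisect_gen N A < edge_gen N x y"
  using bisect_gen_less_edge_gen_split[OF assms(1-3) _ assms(5-8)]
    bisect_gen_less_edge_gen_unsplit[OF assms(1-3) _ assms(4-8)]
  by blast

lemma admissible_child:
  assumes fin: "finite A" and card: "2 \<le> card A" and N: "0 < N" and adm: "admissible N A"
    and p: "p = bisect_partner N A \<or> p = Min A"
  shows "admissible N (insert (bisect_gen N A) (A - {p}))"
proof -
  let ?\<mu> = "bisect_gen N A" and ?B = "insert (bisect_gen N A) (A - {p})"
  have below: "x < ?\<mu>" if "x \<in> A" for x using adm that unfolding admissible_def by blast
  have "p \<in> A" using p bisect_partner_props[OF fin card N] Min_in[OF fin] card by auto
  moreover have "?\<mu> \<notin> A" using below by blast
  ultimately have fin_B: "finite ?B" and card_B: "2 \<le> card ?B"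
    using fin card by (simp_all add: card_Diff_singleton)
  note partner_B = bisect_partner_props[OF fin_B card_B N]
  txt \<open>The bisection edge of the child either ends at the new vertex, whose generation
    is the largest, or is an edge of A different from its bisection edge.\<close>
  have "?\<mu> < bisect_gen N ?B"
  proof (cases "bisect_partner N ?B = ?\<mu>")
    case True
    then show ?thesis
      using less_edge_gen[OF N partner_B(2)] unfolding bisect_gen_def by simp
  next
    case False
    then have partner_A: "bisect_partner N ?B \<in> A - {p}" using partner_B(1) by blast
    then have "Min ?B < ?\<mu>" using partner_B(2) below by force
    then have "Min ?B \<in> A - {p}" using Min_in[OF fin_B] by fastforce
    then show ?thesis
      using bisect_gen_less_edge_gen[OF fin card N adm _ _ partner_B(2)] partner_A p
      unfolding bisect_gen_def[of N ?B] by auto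
  qed
  then show ?thesis using below unfolding admissible_def by force
qed

lemma admissible_initial:
  assumes "finite A" "2 \<le> card A" "0 < N" "\<And>x. x \<in> A \<Longrightarrow> - int N \<le> x \<and> x \<le> 0"
  shows "admissible N A"
proof (cases "low_levels_split N A")
  case True
  have "- int N < second_min A"
    using assms(4) Min_in[OF assms(1)] second_min_props[OF assms(1,2)] assms(2) by force
  then show ?thesis
    using assms(4) bisect_gen_split[OF assms(1,2) True] unfolding admissible_def by force
next
  case False
  note second = second_min_props[OF assms(1,2)]
  have "- int N < second_min A" "second_min A \<le> 0"
    using assms(4)[OF second(1)] assms(4) Min_in[OF assms(1)] second(2) assms(2) by force+
  then have "gen_level N (bisect_gen N A) = 1"
    using gen_level_eq_0[OF assms(3)] bisect_gen_unsplit(5)[OF assms(1-3) False] False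
    unfolding low_levels_split_def by simp
  moreover have "gen_level N x \<le> 0" if "x \<in> A" for x
    using gen_level_mono[of x 0 N] gen_level_eq_0[of N 0] assms(3) assms(4)[OF that] by simp
  ultimately show ?thesis
    unfolding admissible_def by (metis less_of_gen_level_less zero_less_one order.strict_trans1)
qed

section \<open>Bisection of simplices\<close>

text \<open>The reverse inclusion always holds, so this is the conformity condition of
  \<^const>\<open>conforming_triangulation\<close>.\<close>

definition meet_in_face :: "'a::euclidean_space set \<Rightarrow> 'a set \<Rightarrow> bool" where
  "meet_in_face S S' \<longleftrightarrow> convex hull S \<inter> convex hull S' \<subseteq> convex hull (S \<inter> S')"

definition face_to_face :: "'a::euclidean_space set set \<Rightarrow> bool" where
  "face_to_face \<S> \<longleftrightarrow> (\<forall>S\<in>\<S>. \<not> affine_dependent S) \<and> (\<forall>S\<in>\<S>. \<forall>S'\<in>\<S>. meet_in_face S S')"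

lemma meet_in_face_commute: "meet_in_face S S' \<longleftrightarrow> meet_in_face S' S"
  unfolding meet_in_face_def by (simp add: Int_commute)

lemma midpoint_in_convex_hull: "midpoint a b \<in> convex hull {a, b}"
  using midpoint_in_closed_segment[of a b] segment_convex_hull by metis

lemma affine_independent_mem_convex_hull_subset:
  fixes S :: "'a::euclidean_space set"
  assumes "\<not> affine_dependent S" "G \<subseteq> S" "v \<in> S" "v \<in> convex hull G"
  shows "v \<in> G"
proof -
  have "\<not> affine_dependent ({v} \<union> G)" using assms affine_dependent_subset[of "{v} \<union> G" S] by auto
  then have "convex hull ({v} \<inter> G) = convex hull {v} \<inter> convex hull G" by (rule convex_hull_Int)
  then show ?thesis using assms(4) by (cases "v \<in> G") auto
qed

lemma affine_independent_midpoint_in_convex_hull_subset: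
  fixes S :: "'a::euclidean_space set"
  assumes "\<not> affine_dependent S" "G \<subseteq> S" "a \<in> S" "b \<in> S" "a \<noteq> b"
    and "midpoint a b \<in> convex hull G"
  shows "a \<in> G \<and> b \<in> G"
proof -
  have "\<not> affine_dependent ({a, b} \<union> G)" using assms affine_dependent_subset[of "{a, b} \<union> G" S] by auto
  then have "convex hull ({a, b} \<inter> G) = convex hull {a, b} \<inter> convex hull G" by (rule convex_hull_Int)
  then have m: "midpoint a b \<in> convex hull ({a, b} \<inter> G)" using midpoint_in_convex_hull assms(6) by auto
  have "{a, b} \<inter> G \<subseteq> {a, b}" by blast
  then consider "{a, b} \<inter> G = {}" | "{a, b} \<inter> G = {a}" | "{a, b} \<inter> G = {b}" | "{a, b} \<inter> G = {a, b}"
    by blast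
  then show ?thesis
    by cases (use m assms(5) in auto)
qed

lemma affine_independent_midpoint_notin:
  fixes S :: "'a::euclidean_space set"
  assumes "\<not> affine_dependent S" "a \<in> S" "b \<in> S" "a \<noteq> b"
  shows "midpoint a b \<notin> S"
proof
  assume "midpoint a b \<in> S"
  then have "a \<in> {midpoint a b} \<and> b \<in> {midpoint a b}"
    by (intro affine_independent_midpoint_in_convex_hull_subset[OF assms(1) _ assms(2-4)]) auto
  then show False using assms(4) by (metis singletonD)
qed

lemma children_cases:
  assumes "C \<in> children S a b"
  obtains p where "p = a \<or> p = b" "C = insert (midpoint a b) (S - {p})"
  using assms unfolding children_def by blast

lemma convex_hull_child_subset:
  fixes S :: "'a::euclidean_space set"
  assumes "a \<in> S" "b \<in> S"
  shows "convex hull (insert (midpoint a b) (S - {p})) \<subseteq> convex hull S"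
proof (rule hull_minimal)
  have "convex hull {a, b} \<subseteq> convex hull S" using assms by (intro hull_mono) auto
  then show "insert (midpoint a b) (S - {p}) \<subseteq> convex hull S"
    using midpoint_in_convex_hull[of a b] hull_subset[of S convex] by auto
qed (rule convex_convex_hull)

lemma affine_independent_child:
  fixes S :: "'a::euclidean_space set"
  assumes "\<not> affine_dependent S" "a \<in> S" "b \<in> S" "a \<noteq> b" "p = a \<or> p = b"
  shows "\<not> affine_dependent (insert (midpoint a b) (S - {p}))"
proof (rule affine_independent_insert)
  show "\<not> affine_dependent (S - {p})" using assms(1) by (rule affine_independent_Diff)
  define q where "q = (if p = a then b else a)"
  have q: "q \<in> S - {p}" using assms(2-5) unfolding q_def by auto
  show "midpoint a b \<notin> affine hull (S - {p})"
  proof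
    assume "midpoint a b \<in> affine hull (S - {p})"
    then have "2 *\<^sub>R midpoint a b + (-1) *\<^sub>R q \<in> affine hull (S - {p})"
      using mem_affine[OF affine_affine_hull _ hull_inc[OF q], where u=2 and v="-1"] by simp
    moreover have "2 *\<^sub>R midpoint a b + (-1) *\<^sub>R q = p"
      using assms(5) unfolding q_def midpoint_def by (auto simp: algebra_simps)
    ultimately show False
      using assms(1,2,3,5) unfolding affine_dependent_def by auto
  qed
qed

lemma card_child:
  fixes S :: "'a::euclidean_space set"
  assumes "\<not> affine_dependent S" "a \<in> S" "b \<in> S" "a \<noteq> b" "p = a \<or> p = b"
  shows "card (insert (midpoint a b) (S - {p})) = card S"
proof -
  have "finite S" "p \<in> S" using aff_independent_finite[OF assms(1)] assms(2,3,5) by auto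
  then have "0 < card S" by (auto simp: card_gt_0_iff)
  then show ?thesis
    using affine_independent_midpoint_notin[OF assms(1-4)] \<open>finite S\<close> \<open>p \<in> S\<close>
    by (simp add: card_Diff_singleton)
qed

lemma convex_hull_Int_face_subset:
  fixes S :: "'a::euclidean_space set"
  assumes "\<not> affine_dependent S" "\<not> affine_dependent C" "convex hull C \<subseteq> convex hull S" "G \<subseteq> S"
  shows "convex hull C \<inter> convex hull G \<subseteq> convex hull (C \<inter> convex hull G)"
proof -
  have "convex hull G face_of convex hull S"
    using face_of_convex_hull_affine_independent[OF assms(1)] assms(4) by blast
  then have "convex hull G \<inter> convex hull C face_of convex hull S \<inter> convex hull C"
    by (rule face_of_slice) (rule convex_convex_hull)
  then have "convex hull G \<inter> convex hull C face_of convex hull C"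
    using assms(3) by (simp add: Int_absorb1)
  then obtain c where c: "c \<subseteq> C" "convex hull G \<inter> convex hull C = convex hull c"
    using face_of_convex_hull_affine_independent[OF assms(2)] by blast
  have "c \<subseteq> C \<inter> convex hull G" using c hull_subset[of c convex] by auto
  then have "convex hull c \<subseteq> convex hull (C \<inter> convex hull G)" by (rule hull_mono)
  then show ?thesis using c by auto
qed

lemma child_Int_convex_hull_subset:
  fixes S :: "'a::euclidean_space set"
  assumes "\<not> affine_dependent S" "G \<subseteq> S"
  shows "insert (midpoint a b) (S - {p}) \<inter> convex hull G \<subseteq> insert (midpoint a b) (G - {p})"
  using affine_independent_mem_convex_hull_subset[OF assms] by blast

lemma meet_in_face_child:
  fixes S :: "'a::euclidean_space set"
  assumes "\<not> affine_dependent S" "meet_in_face S Y"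
    and "a \<in> S" "b \<in> S" "a \<noteq> b" "p = a \<or> p = b" "\<not> (a \<in> Y \<and> b \<in> Y)"
  shows "meet_in_face (insert (midpoint a b) (S - {p})) Y"
  unfolding meet_in_face_def
proof -
  let ?X = "insert (midpoint a b) (S - {p})" and ?G = "S \<inter> Y"
  have G: "?G \<subseteq> S" by blast
  have sub: "convex hull ?X \<subseteq> convex hull S" using convex_hull_child_subset[OF assms(3,4)] .
  have "midpoint a b \<notin> convex hull ?G"
    using affine_independent_midpoint_in_convex_hull_subset[OF assms(1) G assms(3-5)] assms(7) by blast
  then have "?X \<inter> convex hull ?G \<subseteq> ?X \<inter> Y"
    using child_Int_convex_hull_subset[OF assms(1) G, of a b p] by blast
  then have "convex hull (?X \<inter> convex hull ?G) \<subseteq> convex hull (?X \<inter> Y)" by (rule hull_mono)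
  moreover have "convex hull ?X \<inter> convex hull Y \<subseteq> convex hull ?X \<inter> convex hull ?G"
    using sub assms(2) unfolding meet_in_face_def by blast
  moreover have "\<dots> \<subseteq> convex hull (?X \<inter> convex hull ?G)"
    by (rule convex_hull_Int_face_subset[OF assms(1) affine_independent_child[OF assms(1,3-6)] sub G])
  ultimately show "convex hull ?X \<inter> convex hull Y \<subseteq> convex hull (?X \<inter> Y)" by blast
qed

lemma meet_in_face_children:
  fixes S\<^sub>1 :: "'a::euclidean_space set"
  assumes "\<not> affine_dependent S\<^sub>1" "\<not> affine_dependent S\<^sub>2" "meet_in_face S\<^sub>1 S\<^sub>2"
    and "a \<in> S\<^sub>1 \<inter> S\<^sub>2" "b \<in> S\<^sub>1 \<inter> S\<^sub>2" "a \<noteq> b" "p\<^sub>1 = a \<or> p\<^sub>1 = b" "p\<^sub>2 = a \<or> p\<^sub>2 = b"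
  shows "meet_in_face (insert (midpoint a b) (S\<^sub>1 - {p\<^sub>1})) (insert (midpoint a b) (S\<^sub>2 - {p\<^sub>2}))"
  unfolding meet_in_face_def
proof
  let ?m = "midpoint a b" and ?G = "S\<^sub>1 \<inter> S\<^sub>2"
  let ?X = "insert ?m (S\<^sub>1 - {p\<^sub>1})" and ?Y = "insert ?m (S\<^sub>2 - {p\<^sub>2})"
  fix x assume x: "x \<in> convex hull ?X \<inter> convex hull ?Y"
  have "convex hull ?X \<subseteq> convex hull S\<^sub>1" "convex hull ?Y \<subseteq> convex hull S\<^sub>2"
    using convex_hull_child_subset assms(4,5) by blast+
  then have xG: "x \<in> convex hull ?G" using x assms(3) unfolding meet_in_face_def by blast
  have in_face: "x \<in> convex hull (insert ?m (?G - {p}))"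
    if S: "\<not> affine_dependent S" "?G \<subseteq> S" "a \<in> S" "b \<in> S" and p: "p = a \<or> p = b"
      and xS: "x \<in> convex hull (insert ?m (S - {p}))" for S p
  proof -
    have "x \<in> convex hull (insert ?m (S - {p}) \<inter> convex hull ?G)"
      using convex_hull_Int_face_subset[OF S(1) affine_independent_child[OF S(1,3,4) assms(6) p]
          convex_hull_child_subset[OF S(3,4)] S(2)] xS xG by blast
    then show ?thesis
      using hull_mono[OF child_Int_convex_hull_subset[OF S(1,2), of a b p]] by blast
  qed
  have "x \<in> convex hull (insert ?m (?G - {p\<^sub>1}))"
    by (rule in_face[OF assms(1) _ _ _ assms(7)]) (use x assms(4,5) in auto)
  moreover have "x \<in> convex hull (insert ?m (?G - {p\<^sub>2}))"
    by (rule in_face[OF assms(2) _ _ _ assms(8)]) (use x assms(4,5) in auto)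
  moreover have "\<not> affine_dependent ?G" using affine_independent_subset[OF assms(1)] by blast
  moreover have "?m \<in> convex hull ?G"
    using midpoint_in_convex_hull[of a b] hull_mono[of "{a, b}" ?G] assms(4,5) by blast
  ultimately have "x \<in> convex hull (insert ?m ((?G - {p\<^sub>1}) \<inter> (?G - {p\<^sub>2})))"
    using convex_hull_exchange_Int[of ?G ?m "?G - {p\<^sub>1}" "?G - {p\<^sub>2}"] by blast
  moreover have "insert ?m ((?G - {p\<^sub>1}) \<inter> (?G - {p\<^sub>2})) \<subseteq> ?X \<inter> ?Y" by blast
  ultimately show "x \<in> convex hull (?X \<inter> ?Y)" using hull_mono by blast
qed

definition bisect_family :: "'n::finite smplx set \<Rightarrow> real^'n \<Rightarrow> real^'n \<Rightarrow> 'n smplx set" where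
  "bisect_family \<S> a b = (\<S> - patch \<S> {a, b}) \<union> (\<Union>S\<in>patch \<S> {a, b}. children S a b)"

lemma patch_doubleton: "S \<in> patch \<S> {a, b} \<longleftrightarrow> S \<in> \<S> \<and> a \<in> S \<and> b \<in> S"
  unfolding patch_def by simp

lemma bisect_family_cases:
  assumes "X \<in> bisect_family \<S> a b"
  obtains "X \<in> \<S>" "\<not> (a \<in> X \<and> b \<in> X)"
  | S p where "S \<in> \<S>" "a \<in> S" "b \<in> S" "p = a \<or> p = b" "X = insert (midpoint a b) (S - {p})"
  using assms unfolding bisect_family_def patch_def children_def by auto

lemma face_to_face_bisect_family:
  assumes "face_to_face \<S>" "a \<noteq> b"
  shows "face_to_face (bisect_family \<S> a b)"
proof -
  have indep: "\<not> affine_dependent S" if "S \<in> \<S>" for S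
    using assms(1) that unfolding face_to_face_def by blast
  have meet: "meet_in_face S S'" if "S \<in> \<S>" "S' \<in> \<S>" for S S'
    using assms(1) that unfolding face_to_face_def by blast
  have "\<not> affine_dependent X" if "X \<in> bisect_family \<S> a b" for X
    using that by (cases rule: bisect_family_cases) (auto simp: indep affine_independent_child assms(2))
  moreover have "meet_in_face X Y" if X: "X \<in> bisect_family \<S> a b" and Y: "Y \<in> bisect_family \<S> a b" for X Y
  proof -
    have child_old: "meet_in_face (insert (midpoint a b) (S - {p})) Z"
      if "S \<in> \<S>" "a \<in> S" "b \<in> S" "p = a \<or> p = b" "Z \<in> \<S>" "\<not> (a \<in> Z \<and> b \<in> Z)" for S p Z
      using meet_in_face_child[OF indep meet _ _ assms(2)] that by blast
    from X show ?thesis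
    proof (cases rule: bisect_family_cases)
      case X_old: 1
      from Y show ?thesis
      proof (cases rule: bisect_family_cases)
        case 1
        then show ?thesis using meet X_old by blast
      next
        case (2 S p)
        then show ?thesis using child_old X_old by (simp add: meet_in_face_commute)
      qed
    next
      case X_child: (2 S p)
      from Y show ?thesis
      proof (cases rule: bisect_family_cases)
        case 1
        then show ?thesis using child_old X_child by simp
      next
        case (2 S' p')
        then show ?thesis
          using meet_in_face_children[OF indep indep meet _ _ assms(2)] X_child by simp
      qed
    qed
  qed
  ultimately show ?thesis unfolding face_to_face_def by blast
qed

lemma midpoint_notin_Union_face_to_face:
  assumes "face_to_face \<S>" "T \<in> \<S>" "a \<in> T" "b \<in> T" "a \<noteq> b"
  shows "midpoint a b \<notin> \<Union>\<S>"
proof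
  assume "midpoint a b \<in> \<Union>\<S>"
  then obtain Y where Y: "Y \<in> \<S>" "midpoint a b \<in> Y" by blast
  have indep: "\<not> affine_dependent T" "\<not> affine_dependent Y" and "meet_in_face T Y"
    using assms(1,2) Y(1) unfolding face_to_face_def by blast+
  moreover have "midpoint a b \<in> convex hull T \<inter> convex hull Y"
    using convex_hull_child_subset[OF assms(3,4), of a] Y(2) hull_inc[of _ Y] hull_inc[of "midpoint a b"] by blast
  ultimately have "midpoint a b \<in> convex hull (T \<inter> Y)" unfolding meet_in_face_def by blast
  then have "a \<in> Y" "b \<in> Y"
    using affine_independent_midpoint_in_convex_hull_subset[OF indep(1) _ assms(3-5), of "T \<inter> Y"] by auto
  then show False using affine_independent_midpoint_notin[OF indep(2) _ _ assms(5)] Y(2) by blast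
qed

lemma Union_subset_bisect_family:
  assumes "a \<noteq> b"
  shows "\<Union>\<S> \<subseteq> \<Union>(bisect_family \<S> a b)"
proof
  fix v assume "v \<in> \<Union>\<S>"
  then obtain X where X: "X \<in> \<S>" "v \<in> X" by blast
  show "v \<in> \<Union>(bisect_family \<S> a b)"
  proof (cases "X \<in> patch \<S> {a, b}")
    case True
    then have "insert (midpoint a b) (X - {if v = a then b else a}) \<in> bisect_family \<S> a b"
      unfolding bisect_family_def children_def using assms by auto
    moreover have "v \<in> insert (midpoint a b) (X - {if v = a then b else a})" using X(2) assms by auto
    ultimately show ?thesis by blast
  next
    case False
    then show ?thesis using X unfolding bisect_family_def by blast
  qed
qed

section \<open>Generations of the vertices of a simplex\<close>

lemma lev_eq_gen_level: "lev N g v = gen_level N (g v)"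
  unfolding lev_def gen_level_def by simp

lemma vtype_eq_gen_type: "vtype N g v = gen_type N (g v)"
  unfolding vtype_def gen_type_def lev_eq_gen_level by simp

lemma vlow_props:
  assumes "finite T" "T \<noteq> {}" "inj_on g T"
  shows "vlow g T \<in> T" "g (vlow g T) = Min (g ` T)"
proof -
  have "Min (g ` T) \<in> g ` T" using assms by simp
  then obtain v where v: "v \<in> T" "g v = Min (g ` T)" by auto
  have "vlow g T = v" unfolding vlow_def
  proof (rule the_equality)
    show "v \<in> T \<and> (\<forall>w\<in>T. g v \<le> g w)" using v assms(1) by simp
    fix u assume u: "u \<in> T \<and> (\<forall>w\<in>T. g u \<le> g w)"
    then have "g u \<le> g v" "g v \<le> g u" using v assms(1) by auto
    then have "g u = g v" by (rule order_antisym)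
    then show "u = v" using u v(1) assms(3) by (meson inj_onD)
  qed
  then show "vlow g T \<in> T" "g (vlow g T) = Min (g ` T)" using v by auto
qed

lemma vlow2_props:
  assumes "finite T" "2 \<le> card T" "inj_on g T"
  shows "vlow2 g T \<in> T" "g (vlow2 g T) = second_min (g ` T)"
proof -
  have "T \<noteq> {}" using assms(2) by auto
  note low = vlow_props[OF assms(1) this assms(3)]
  have "card (T - {vlow g T}) \<noteq> 0" using assms(1,2) low(1) by (simp add: card_Diff_singleton)
  then have "T - {vlow g T} \<noteq> {}" by (metis card.empty)
  moreover have "inj_on g (T - {vlow g T})" using assms(3) by (rule inj_on_subset) blast
  moreover have "g ` (T - {vlow g T}) = g ` T - {Min (g ` T)}"
    using assms(3) low by (auto simp: inj_on_def)
  ultimately show "vlow2 g T \<in> T" "g (vlow2 g T) = second_min (g ` T)"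
    using vlow_props[of "T - {vlow g T}" g] assms(1) unfolding vlow2_def second_min_def by auto
qed

lemma vtop_lev_props:
  assumes "finite T" "T \<noteq> {}" "inj_on g T"
  shows "vtop_lev N g T \<in> T" "g (vtop_lev N g T) = top_of_low_level N (g ` T)"
proof -
  note low = vlow_props[OF assms]
  have "finite (g ` T)" "g ` T \<noteq> {}" using assms by auto
  note top = top_of_low_level_props[OF this, where N=N]
  obtain u where u: "u \<in> T" "g u = top_of_low_level N (g ` T)" using top(1) by auto
  have "vtop_lev N g T = u" unfolding vtop_lev_def
  proof (rule the_equality)
    show "u \<in> T \<and> lev N g u = lev N g (vlow g T) \<and>
        (\<forall>w\<in>T. lev N g w = lev N g (vlow g T) \<longrightarrow> g w \<le> g u)"
      using u top low unfolding lev_eq_gen_level by auto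
    fix z assume z: "z \<in> T \<and> lev N g z = lev N g (vlow g T) \<and>
        (\<forall>w\<in>T. lev N g w = lev N g (vlow g T) \<longrightarrow> g w \<le> g z)"
    then have "g z = g u" using u top low unfolding lev_eq_gen_level by (auto intro: order_antisym)
    then show "z = u" using z u(1) assms(3) by (meson inj_onD)
  qed
  then show "vtop_lev N g T \<in> T" "g (vtop_lev N g T) = top_of_low_level N (g ` T)" using u by auto
qed

lemma bisection_edge_gens:
  assumes "finite T" "2 \<le> card T" "inj_on g T" "0 < N"
  shows "bse_other N g T \<in> T" "vlow g T \<in> T"
    "g (bse_other N g T) = bisect_partner N (g ` T)" "g (vlow g T) = Min (g ` T)"
    "midgen N g T = bisect_gen N (g ` T)"
    "g (vlow g T) < g (bse_other N g T)"
    "midgen N g T = edge_gen N (g (bse_other N g T)) (g (vlow g T))"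
proof -
  have ne: "T \<noteq> {}" using assms(2) by auto
  note low = vlow_props[OF assms(1) ne assms(3)]
  note low2 = vlow2_props[OF assms(1-3)]
  note top = vtop_lev_props[OF assms(1) ne assms(3), where N=N]
  have gens: "finite (g ` T)" "2 \<le> card (g ` T)" using assms by (auto simp: card_image)
  have split: "low_levels_split N (g ` T) \<longleftrightarrow> lev N g (vlow2 g T) \<noteq> lev N g (vlow g T)"
    unfolding low_levels_split_def lev_eq_gen_level using low low2 by simp
  show partner: "bse_other N g T \<in> T" "g (bse_other N g T) = bisect_partner N (g ` T)"
    unfolding bse_other_def bisect_partner_def using split low2 top by auto
  show "vlow g T \<in> T" "g (vlow g T) = Min (g ` T)" using low by auto
  show mid: "midgen N g T = bisect_gen N (g ` T)"
    using bisect_gen_split[OF gens] bisect_gen_unsplit[OF gens assms(4)] split low low2 top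
    unfolding midgen_def vtype_eq_gen_type by auto
  show "g (vlow g T) < g (bse_other N g T)"
    using bisect_partner_props[OF gens assms(4)] partner low by simp
  show "midgen N g T = edge_gen N (g (bse_other N g T)) (g (vlow g T))"
    using mid partner low unfolding bisect_gen_def by simp
qed

section \<open>The refinement invariant\<close>

definition admissible_mesh :: "nat \<Rightarrow> 'n::finite smplx set \<Rightarrow> (real^'n \<Rightarrow> int) \<Rightarrow> bool" where
  "admissible_mesh N \<T> g \<longleftrightarrow>
     face_to_face \<T> \<and> (\<forall>S\<in>\<T>. 2 \<le> card S \<and> inj_on g S \<and> admissible N (g ` S))"

definition edges_above :: "nat \<Rightarrow> ('a \<Rightarrow> int) \<Rightarrow> 'a set \<Rightarrow> int \<Rightarrow> bool" where
  "edges_above N g X B \<longleftrightarrow> (\<forall>x\<in>X. \<forall>y\<in>X. g y < g x \<longrightarrow> B < edge_gen N (g x) (g y))"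

definition mesh_extends :: "'a set set \<Rightarrow> ('a \<Rightarrow> int) \<Rightarrow> 'a set set \<Rightarrow> ('a \<Rightarrow> int) \<Rightarrow> bool" where
  "mesh_extends \<T> g \<T>' g' \<longleftrightarrow> \<Union>\<T> \<subseteq> \<Union>\<T>' \<and> (\<forall>v\<in>\<Union>\<T>. g' v = g v)"

lemma admissible_meshD:
  assumes "admissible_mesh N \<T> g" "S \<in> \<T>"
  shows "\<not> affine_dependent S" "finite S" "2 \<le> card S" "inj_on g S" "admissible N (g ` S)"
    "finite (g ` S)" "2 \<le> card (g ` S)"
  using assms aff_independent_finite unfolding admissible_mesh_def face_to_face_def
  by (auto simp: card_image)

lemma mesh_extends_trans:
  "mesh_extends \<T>\<^sub>1 g\<^sub>1 \<T>\<^sub>2 g\<^sub>2 \<Longrightarrow> mesh_extends \<T>\<^sub>2 g\<^sub>2 \<T>\<^sub>3 g\<^sub>3 \<Longrightarrow> mesh_extends \<T>\<^sub>1 g\<^sub>1 \<T>\<^sub>3 g\<^sub>3"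
  unfolding mesh_extends_def by (metis subset_iff)

lemma edges_above_mono: "edges_above N g X B \<Longrightarrow> B' \<le> B \<Longrightarrow> edges_above N g X B'"
  unfolding edges_above_def by force

lemma edges_above_cong: "(\<And>v. v \<in> X \<Longrightarrow> g' v = g v) \<Longrightarrow> edges_above N g' X B = edges_above N g X B"
  unfolding edges_above_def by simp

lemma midgen_cong:
  assumes "finite T" "2 \<le> card T" "inj_on g T" "0 < N" "\<And>v. v \<in> T \<Longrightarrow> g' v = g v"
  shows "midgen N g' T = midgen N g T"
proof -
  have "inj_on g' T" using assms(3,5) by (simp add: inj_on_def)
  moreover have "g' ` T = g ` T" using assms(5) by (simp add: image_def)
  ultimately show ?thesis using bisection_edge_gens(5) assms(1-4) by metis
qed

lemma slev_cong: "(\<And>v. v \<in> C \<Longrightarrow> g' v = g v) \<Longrightarrow> slev N g' C = slev N g C"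
  unfolding slev_def lev_eq_gen_level by (metis image_cong)

lemma midgen_less_midgen:
  assumes S: "finite S" "2 \<le> card S" "inj_on g S" "admissible N (g ` S)"
    and T: "finite T" "2 \<le> card T" "inj_on g T"
    and N: "0 < N" and "bse N g T \<subseteq> S" "bse N g S \<noteq> bse N g T"
  shows "midgen N g S < midgen N g T"
proof -
  note edge_S = bisection_edge_gens[OF S(1-3) N]
  note edge_T = bisection_edge_gens[OF T N]
  let ?a = "bse_other N g T" and ?b = "vlow g T"
  have ab: "?a \<in> S" "?b \<in> S" using assms(9) unfolding bse_def by auto
  have "\<not> (g ?a = bisect_partner N (g ` S) \<and> g ?b = Min (g ` S))"
  proof
    assume "g ?a = bisect_partner N (g ` S) \<and> g ?b = Min (g ` S)"
    then have "?a = bse_other N g S" "?b = vlow g S"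
      using edge_S(1-4) ab S(3) by (metis inj_onD)+
    then show False using assms(10) unfolding bse_def by simp
  qed
  then have "bisect_gen N (g ` S) < edge_gen N (g ?a) (g ?b)"
    using bisect_gen_less_edge_gen[OF _ _ N S(4)] S(1,2,3) ab edge_T(6) by (simp add: card_image)
  then show ?thesis using edge_S(5) edge_T(7) by simp
qed

lemma edges_above_of_less_midgen:
  assumes "finite T" "2 \<le> card T" "inj_on g T" "admissible N (g ` T)" "0 < N"
    and "B < midgen N g T"
  shows "edges_above N g T B"
  unfolding edges_above_def
proof (intro ballI impI)
  fix x y assume xy: "x \<in> T" "y \<in> T" "g y < g x"
  note edge = bisection_edge_gens[OF assms(1-3,5)]
  have "midgen N g T \<le> edge_gen N (g x) (g y)"
  proof (cases "g x = bisect_partner N (g ` T) \<and> g y = Min (g ` T)")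
    case True
    then show ?thesis using edge(5) unfolding bisect_gen_def by simp
  next
    case False
    have "finite (g ` T)" "2 \<le> card (g ` T)" using assms(1-3) by (auto simp: card_image)
    then show ?thesis
      using bisect_gen_less_edge_gen[OF _ _ assms(5,4), of "g x" "g y"] False xy edge(5) by simp
  qed
  then show "B < edge_gen N (g x) (g y)" using assms(6) by simp
qed

lemma not_edges_above_midgen:
  assumes "finite T" "2 \<le> card T" "inj_on g T" "0 < N" "bse N g T \<subseteq> X"
  shows "\<not> edges_above N g X (midgen N g T)"
  using bisection_edge_gens[OF assms(1-4)] assms(5) unfolding edges_above_def bse_def by force

lemma child_gens:
  assumes S: "finite S" "2 \<le> card S" "inj_on g S" "admissible N (g ` S)" and N: "0 < N"
    and p: "p = bse_other N g S \<or> p = vlow g S" and m: "m \<notin> S"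
    and g': "\<And>v. v \<in> S \<Longrightarrow> g' v = g v" "g' m = midgen N g S"
  defines "C \<equiv> insert m (S - {p})"
  shows "inj_on g' C" "admissible N (g' ` C)"
    "\<And>v. v \<in> C \<Longrightarrow> gen_level N (g' v) \<le> gen_level N (midgen N g S)"
proof -
  note edge = bisection_edge_gens[OF S(1-3) N]
  have gens: "finite (g ` S)" "2 \<le> card (g ` S)" using S by (auto simp: card_image)
  have below: "g v < midgen N g S" if "v \<in> S" for v
    using S(4) that edge(5) unfolding admissible_def by auto
  have "p \<in> S" using p edge(1,2) by auto
  have old: "g' ` (S - {p}) = g ` S - {g p}"
    using g'(1) S(3) \<open>p \<in> S\<close> by (auto simp: inj_on_def image_iff)
  have "inj_on g' (S - {p})" using inj_on_subset[OF S(3)] g'(1) inj_on_cong[of "S - {p}" g' g] by blast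
  moreover have "midgen N g S \<notin> g ` S"
  proof
    assume "midgen N g S \<in> g ` S"
    then obtain v where "v \<in> S" "midgen N g S = g v" by auto
    then show False using below[of v] by simp
  qed
  then have "g' m \<notin> g' ` (S - {p})" using old g'(2) by simp
  ultimately show "inj_on g' C" using m unfolding C_def by simp
  have "g' ` C = insert (bisect_gen N (g ` S)) (g ` S - {g p})"
    using old g'(2) edge(5) unfolding C_def by simp
  then show "admissible N (g' ` C)"
    using admissible_child[OF gens N S(4)] p edge(3,4) by auto
  show "gen_level N (g' v) \<le> gen_level N (midgen N g S)" if "v \<in> C" for v
  proof (cases "v = m")
    case False
    then have "g' v < midgen N g S" using that below g'(1) unfolding C_def by simp
    then show ?thesis by (simp add: gen_level_mono)
  qed (simp add: g'(2))
qed

definition refines_below ::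
    "nat \<Rightarrow> 'n::finite smplx set \<Rightarrow> (real^'n \<Rightarrow> int) \<Rightarrow> int \<Rightarrow> 'n smplx set \<Rightarrow> (real^'n \<Rightarrow> int) \<Rightarrow> bool"
  where
  "refines_below N \<T> g B \<T>' g' \<longleftrightarrow>
     admissible_mesh N \<T>' g' \<and> mesh_extends \<T> g \<T>' g' \<and>
     (\<forall>X\<in>\<T>. edges_above N g X B \<longrightarrow> X \<in> \<T>') \<and> (\<forall>C\<in>\<T>' - \<T>. slev N g' C \<le> gen_level N B)"

lemma refines_below_trans:
  assumes "refines_below N \<T> g B\<^sub>1 \<T>\<^sub>1 g\<^sub>1" "refines_below N \<T>\<^sub>1 g\<^sub>1 B\<^sub>2 \<T>\<^sub>2 g\<^sub>2" "B\<^sub>1 \<le> B\<^sub>2"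
  shows "refines_below N \<T> g B\<^sub>2 \<T>\<^sub>2 g\<^sub>2"
proof -
  have ext\<^sub>1: "mesh_extends \<T> g \<T>\<^sub>1 g\<^sub>1" and ext\<^sub>2: "mesh_extends \<T>\<^sub>1 g\<^sub>1 \<T>\<^sub>2 g\<^sub>2"
    using assms(1,2) unfolding refines_below_def by blast+
  show ?thesis
    unfolding refines_below_def
  proof (intro conjI ballI impI)
    show "admissible_mesh N \<T>\<^sub>2 g\<^sub>2" using assms(2) unfolding refines_below_def by blast
    show "mesh_extends \<T> g \<T>\<^sub>2 g\<^sub>2" using mesh_extends_trans[OF ext\<^sub>1 ext\<^sub>2] .
  next
    fix X assume X: "X \<in> \<T>" "edges_above N g X B\<^sub>2"
    then have "X \<in> \<T>\<^sub>1" using assms(1,3) edges_above_mono unfolding refines_below_def by blast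
    moreover have "edges_above N g\<^sub>1 X B\<^sub>2"
      using X ext\<^sub>1 edges_above_cong[of X g\<^sub>1 g] unfolding mesh_extends_def by auto
    ultimately show "X \<in> \<T>\<^sub>2" using assms(2) unfolding refines_below_def by blast
  next
    fix C assume C: "C \<in> \<T>\<^sub>2 - \<T>"
    show "slev N g\<^sub>2 C \<le> gen_level N B\<^sub>2"
    proof (cases "C \<in> \<T>\<^sub>1")
      case True
      then have "slev N g\<^sub>2 C = slev N g\<^sub>1 C"
        using ext\<^sub>2 slev_cong[of C g\<^sub>2 g\<^sub>1] unfolding mesh_extends_def by blast
      moreover have "slev N g\<^sub>1 C \<le> gen_level N B\<^sub>1"
        using assms(1) C True unfolding refines_below_def by blast
      ultimately show ?thesis using gen_level_mono[OF assms(3), of N] by simp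
    next
      case False
      then show ?thesis using assms(2) C unfolding refines_below_def by blast
    qed
  qed
qed

lemma patch_child_gens:
  assumes adm: "admissible_mesh N \<T> g" and N: "0 < N" and T: "T \<in> \<T>"
    and same_edge: "\<forall>S\<in>patch \<T> (bse N g T). bse N g S = bse N g T"
    and S: "S \<in> patch \<T> (bse N g T)" and C: "C \<in> children S (bse_other N g T) (vlow g T)"
    and g': "\<And>v. v \<in> S \<Longrightarrow> g' v = g v" "g' (bse_mid N g T) = midgen N g T"
  shows "2 \<le> card C" "inj_on g' C" "admissible N (g' ` C)"
    "\<And>v. v \<in> C \<Longrightarrow> gen_level N (g' v) \<le> gen_level N (midgen N g T)"
proof -
  have "S \<in> \<T>" using S unfolding patch_def by blast
  note S_props = admissible_meshD[OF adm this]
  note edge_S = bisection_edge_gens[OF S_props(2-4) N]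
  note edge_T = bisection_edge_gens[OF admissible_meshD(2-4)[OF adm T] N]
  have "{bse_other N g S, vlow g S} = {bse_other N g T, vlow g T}"
    using same_edge S unfolding bse_def by blast
  then have same: "bse_other N g S = bse_other N g T" "vlow g S = vlow g T"
    using edge_S(6) edge_T(6) by (auto simp: doubleton_eq_iff)
  then have mid: "midgen N g S = midgen N g T" using edge_S(7) edge_T(7) by simp
  obtain p where p: "p = bse_other N g S \<or> p = vlow g S" and C_eq: "C = insert (bse_mid N g T) (S - {p})"
    using C same unfolding bse_mid_def by (elim children_cases) auto
  have ab: "bse_other N g S \<noteq> vlow g S" using edge_S(6) by auto
  have "bse_mid N g T \<notin> S"
    using affine_independent_midpoint_notin[OF S_props(1) edge_S(1,2) ab] same unfolding bse_mid_def by simp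
  from child_gens[OF S_props(2-5) N p this g'(1)] g'(2)
  show "inj_on g' C" "admissible N (g' ` C)"
    "\<And>v. v \<in> C \<Longrightarrow> gen_level N (g' v) \<le> gen_level N (midgen N g T)"
    unfolding C_eq mid by auto
  show "2 \<le> card C"
    using card_child[OF S_props(1) edge_S(1,2) ab p] S_props(3) same C_eq unfolding bse_mid_def by simp
qed

lemma refine_bisect:
  assumes adm: "admissible_mesh N \<T> g" and N: "0 < N" and T: "T \<in> \<T>"
    and same_edge: "\<forall>S\<in>patch \<T> (bse N g T). bse N g S = bse N g T"
  defines "a \<equiv> bse_other N g T" and "b \<equiv> vlow g T" and "\<mu> \<equiv> midgen N g T"
  defines "g' \<equiv> g(midpoint a b := \<mu>)"
  shows "refines_below N \<T> g \<mu> (bisect_family \<T> a b) g'"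
proof -
  note T_props = admissible_meshD[OF adm T]
  note edge = bisection_edge_gens[OF T_props(2-4) N, folded a_def b_def \<mu>_def]
  have ab: "a \<noteq> b" using edge(6) by auto
  have patch: "patch \<T> (bse N g T) = patch \<T> {a, b}" unfolding bse_def a_def b_def by simp
  have f2f: "face_to_face \<T>" using adm unfolding admissible_mesh_def by blast
  have "midpoint a b \<notin> \<Union>\<T>" using midpoint_notin_Union_face_to_face[OF f2f T edge(1,2) ab] .
  then have g'_old: "g' v = g v" if "v \<in> \<Union>\<T>" for v using that unfolding g'_def by auto
  note child = patch_child_gens[OF adm N T same_edge, unfolded patch, folded a_def b_def \<mu>_def]
  have child_mid: "g' (bse_mid N g T) = \<mu>" unfolding g'_def bse_mid_def a_def b_def by simp
  have "2 \<le> card X \<and> inj_on g' X \<and> admissible N (g' ` X)" if X: "X \<in> bisect_family \<T> a b" for X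
  proof (cases "X \<in> \<T> - patch \<T> {a, b}")
    case True
    then have "X \<in> \<T>" "\<And>v. v \<in> X \<Longrightarrow> g' v = g v" using g'_old by auto
    then show ?thesis
      using admissible_meshD[OF adm \<open>X \<in> \<T>\<close>] inj_on_cong[of X g' g] image_cong[of X X g' g] by auto
  next
    case False
    then obtain S where "S \<in> patch \<T> {a, b}" "X \<in> children S a b"
      using X unfolding bisect_family_def by blast
    then show ?thesis using child[of S X g'] g'_old child_mid unfolding patch_def by blast
  qed
  then have "admissible_mesh N (bisect_family \<T> a b) g'"
    using face_to_face_bisect_family[OF f2f ab] unfolding admissible_mesh_def by blast
  moreover have "mesh_extends \<T> g (bisect_family \<T> a b) g'"
    using Union_subset_bisect_family[OF ab] g'_old unfolding mesh_extends_def by blast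
  moreover have "X \<in> bisect_family \<T> a b" if "X \<in> \<T>" "edges_above N g X \<mu>" for X
  proof -
    have "X \<notin> patch \<T> {a, b}"
      using not_edges_above_midgen[OF T_props(2-4) N] that(2)
      unfolding patch_doubleton bse_def a_def b_def \<mu>_def by auto
    then show ?thesis using that(1) unfolding bisect_family_def by blast
  qed
  moreover have "slev N g' C \<le> gen_level N \<mu>" if new: "C \<in> bisect_family \<T> a b - \<T>" for C
  proof -
    obtain S where S: "S \<in> patch \<T> {a, b}" "C \<in> children S a b"
      using new unfolding bisect_family_def by blast
    then have "2 \<le> card C" "\<And>v. v \<in> C \<Longrightarrow> gen_level N (g' v) \<le> gen_level N \<mu>"
      using child[of S C g'] g'_old child_mid unfolding patch_def by blast+
    moreover from this(1) have "finite C" "C \<noteq> {}" by (auto intro: card_ge_0_finite)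
    ultimately show ?thesis unfolding slev_def lev_eq_gen_level by simp
  qed
  ultimately show ?thesis unfolding refines_below_def by blast
qed

lemma refine_refines_below:
  assumes "refine N (\<T>, g) T (\<T>', g')" "0 < N" "admissible_mesh N \<T> g" "T \<in> \<T>"
  shows "refines_below N \<T> g (midgen N g T) \<T>' g'"
  using assms
proof (induction "(\<T>, g)" T "(\<T>', g')" arbitrary: \<T> g \<T>' g' rule: refine.induct)
  case (recur S \<T> g T st\<^sub>1)
  obtain \<T>\<^sub>1 g\<^sub>1 where st\<^sub>1: "st\<^sub>1 = (\<T>\<^sub>1, g\<^sub>1)" by (cases st\<^sub>1)
  have N: "0 < N" and adm: "admissible_mesh N \<T> g" and T: "T \<in> \<T>" by (fact recur.prems)+
  have S: "S \<in> \<T>" "bse N g T \<subseteq> S" using recur.hyps(1) unfolding patch_def by auto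
  note T_props = admissible_meshD[OF adm T]
  have less: "midgen N g S < midgen N g T"
    using midgen_less_midgen[OF admissible_meshD(2-5)[OF adm S(1)] T_props(2-4) N S(2) recur.hyps(2)] .
  have first: "refines_below N \<T> g (midgen N g S) \<T>\<^sub>1 g\<^sub>1"
    using recur.hyps(4)[OF st\<^sub>1 N adm S(1)] .
  then have "admissible_mesh N \<T>\<^sub>1 g\<^sub>1" "T \<in> \<T>\<^sub>1" "\<And>v. v \<in> T \<Longrightarrow> g\<^sub>1 v = g v"
    using edges_above_of_less_midgen[OF T_props(2-5) N less] T
    unfolding refines_below_def mesh_extends_def by blast+
  then have "refines_below N \<T>\<^sub>1 g\<^sub>1 (midgen N g T) \<T>' g'"
    using recur.hyps(6)[OF st\<^sub>1 N] midgen_cong[OF T_props(2-4) N] by metis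
  then show ?case using refines_below_trans[OF first] less by simp
next
  case (bisect \<T> g T)
  then show ?case
    using refine_bisect[OF bisect.prems(2,1,3) bisect.hyps]
    unfolding bisect_family_def bse_def bse_mid_def by simp
qed

lemma admissible_mesh_initial:
  assumes "0 < N" "colored_triangulation N \<T>\<^sub>0 c"
  shows "admissible_mesh N \<T>\<^sub>0 (\<lambda>v. - int (c v))"
proof -
  have conf: "conforming_triangulation \<T>\<^sub>0"
    using assms(2) unfolding colored_triangulation_def polyhedral_domain_triangulation_def by simp
  have "face_to_face \<T>\<^sub>0"
    using conf unfolding conforming_triangulation_def is_nsimplex_def face_to_face_def meet_in_face_def
    by blast
  moreover have "2 \<le> card S \<and> inj_on (\<lambda>v. - int (c v)) S \<and> admissible N ((\<lambda>v. - int (c v)) ` S)"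
    if S: "S \<in> \<T>\<^sub>0" for S
  proof -
    have "finite S" "card S = CARD('a) + 1"
      using conf S unfolding conforming_triangulation_def is_nsimplex_def by auto
    moreover have "inj_on (\<lambda>v. - int (c v)) S"
      using assms(2) S unfolding colored_triangulation_def by (simp add: inj_on_def)
    moreover have "c v \<le> N" if "v \<in> S" for v
      using assms(2) S that unfolding colored_triangulation_def vertices_def by blast
    ultimately show ?thesis
      using admissible_initial[OF _ _ assms(1), of "(\<lambda>v. - int (c v)) ` S"] by (force simp: card_image)
  qed
  ultimately show ?thesis unfolding admissible_mesh_def by blast
qed

lemma BB_admissible_mesh:
  assumes "(\<T>, g) \<in> BB N \<T>\<^sub>0 c" "0 < N" "colored_triangulation N \<T>\<^sub>0 c"
  shows "admissible_mesh N \<T> g"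
  using assms(1)
proof (induction "(\<T>, g)" arbitrary: \<T> g rule: BB.induct)
  case init
  then show ?case using admissible_mesh_initial[OF assms(2,3)] by simp
next
  case (step \<T>' g' M)
  then show ?case using refine_refines_below[OF _ assms(2)] unfolding refines_below_def by blast
qed

lemma gen_level_midgen_le_slev:
  assumes "finite M" "2 \<le> card M" "inj_on g M" "0 < N"
  shows "gen_level N (midgen N g M) \<le> slev N g M + 1"
proof -
  have "finite (g ` M)" "2 \<le> card (g ` M)" using assms(1-3) by (auto simp: card_image)
  then obtain v where "v \<in> M" "gen_level N (midgen N g M) \<le> gen_level N (g v) + 1"
    using gen_level_bisect_gen_le[OF _ _ assms(4)] bisection_edge_gens(5)[OF assms] by auto
  moreover have "lev N g v \<le> slev N g M" unfolding slev_def using assms(1) \<open>v \<in> M\<close> by simp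
  ultimately show ?thesis unfolding lev_eq_gen_level by simp
qed

theorem corollary3p10:
  fixes \<T>0 :: "'n::finite smplx set" and c :: "real^'n \<Rightarrow> nat" and N :: nat
    and \<T> :: "'n smplx set" and g :: "real^'n \<Rightarrow> int" and M :: "'n smplx"
  assumes "CARD('n) \<ge> 2" and "N \<ge> CARD('n)"
    and "colored_triangulation N \<T>0 c"
    and "(\<T>, g) \<in> BB N \<T>0 c"
    and "M \<in> \<T>"
    and "refine N (\<T>, g) M (\<T>', g')"
    and "T \<in> \<T>' - \<T>"
  shows "slev N g' T \<le> slev N g M + 1"
proof -
  have N: "0 < N" using assms(2) zero_less_card_finite[where 'a='n] by linarith
  have adm: "admissible_mesh N \<T> g" using BB_admissible_mesh[OF assms(4) N assms(3)] .
  have "slev N g' T \<le> gen_level N (midgen N g M)"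
    using refine_refines_below[OF assms(6) N adm assms(5)] assms(7) unfolding refines_below_def by blast
  also have "\<dots> \<le> slev N g M + 1"
    using gen_level_midgen_le_slev[OF admissible_meshD(2-4)[OF adm assms(5)] N] .
  finally show ?thesis .
qed

end
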